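(* Let $m\geq 3$ be odd, $n=3m$, and let $\mathcal{L}_n$ be the latin square defined below. Every transversal of $\mathcal{L}_n$ contains at least one entry of the block $A_{22}$.
   Context: A latin square of order $n$ is viewed as its set of entries $(r,c,s)$ (symbol $s$ in row $r$, column $c$); a transversal is a set of $n$ entries containing each row, column and symbol exactly once. Let $m\ge3$ be odd and $n=3m$. The latin square $\mathcal{L}_n$ has rows, columns and symbols in $\{0,1,\dots,n-1\}$ and is partitioned into nine $m\times m$ blocks $A_{ij}$, $i,j\in\{1,2,3\}$: for $a,b\in\{0,\dots,m-1\}$, the cell in row $(i-1)m+a$ and column $(j-1)m+b$ contains $A_{ij}[a,b]$. Writing $t$ for the residue of $a+b$ modulo $m$ in $\{0,\dots,m-1\}$, $A_{ij}[a,b]=t$ if $t\neq 0$ and $i+j\equiv 2\pmod 3$; $A_{ij}[a,b]=t+m$ if $t\neq m-1$ and $i+j\equiv 0\pmod 3$; $A_{ij}[a,b]=t+2m$ if $t\neq m-1$ and $i+j\equiv1\pmod3$; $A_{ij}[a,b]=0$ if $t=0$ and $(i,j)=(1,1)$; $A_{ij}[a,b]=2m-1$ if $t=0$ and $(i,j)=(2,3)$; $A_{ij}[a,b]=3m-1$ if $t=0$ and $(i,j)=(3,2)$; $A_{ij}[a,b]=0$ if $t=m-1$ and $(i,j)\in\{(2,2),(3,3)\}$; $A_{ij}[a,b]=2m-1$ if $t=m-1$ and $(i,j)\in\{(1,2),(3,1)\}$; $A_{ij}[a,b]=3m-1$ if $t=m-1$ and $(i,j)\in\{(1,3),(2,1)\}$.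 An entry of $\mathcal{L}_n$ is said to be in block $A_{ij}$ if its cell lies in that block. *)

theory Defs
  imports Main
begin

text \<open>A latin square is viewed as its set of entries (row, column, symbol).\<close>
type_synonym entry = "nat \<times> nat \<times> nat"

text \<open>Block entry A_ij[a,b], with i, j in {1,2,3} and a, b in {0..m-1}.\<close>
definition Ablock :: "nat \<Rightarrow> nat \<Rightarrow> nat \<Rightarrow> nat \<Rightarrow> nat \<Rightarrow> nat" where
  "Ablock m i j a b =
    (let t = (a + b) mod m in
     if t \<noteq> 0 \<and> (i + j) mod 3 = 2 then t
     else if t \<noteq> m - 1 \<and> (i + j) mod 3 = 0 then t + m
     else if t \<noteq> m - 1 \<and> (i + j) mod 3 = 1 then t + 2 * m
     else if t = 0 \<and> (i, j) = (1, 1) then 0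
     else if t = 0 \<and> (i, j) = (2, 3) then 2 * m - 1
     else if t = 0 \<and> (i, j) = (3, 2) then 3 * m - 1
     else if t = m - 1 \<and> (i, j) \<in> {(2, 2), (3, 3)} then 0
     else if t = m - 1 \<and> (i, j) \<in> {(1, 2), (3, 1)} then 2 * m - 1
     else if t = m - 1 \<and> (i, j) \<in> {(1, 3), (2, 1)} then 3 * m - 1
     else undefined)"

definition Lsq :: "nat \<Rightarrow> entry set" where
  "Lsq m = {(r, c, s). r < 3 * m \<and> c < 3 * m \<and>
              s = Ablock m (r div m + 1) (c div m + 1) (r mod m) (c mod m)}"

definition transversal :: "nat \<Rightarrow> entry set \<Rightarrow> entry set \<Rightarrow> bool" where
  "transversal n L T \<longleftrightarrow> T \<subseteq> L \<and> finite T \<and> card T = n \<and>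
     (\<forall>r<n. \<exists>!e\<in>T. fst e = r) \<and>
     (\<forall>c<n. \<exists>!e\<in>T. fst (snd e) = c) \<and>
     (\<forall>s<n. \<exists>!e\<in>T. snd (snd e) = s)"

definition in_block :: "nat \<Rightarrow> nat \<Rightarrow> nat \<Rightarrow> entry \<Rightarrow> bool" where
  "in_block m i j e \<longleftrightarrow> (i - 1) * m \<le> fst e \<and> fst e < i * m \<and>
                          (j - 1) * m \<le> fst (snd e) \<and> fst (snd e) < j * m"

end

(*
  Suppose a transversal T avoids A22. Write an entry as (r, c, s) with r = I m + a,
  c = J m + b, s = K m + k, where I, J, K < 3 and a, b, k < m. Every cell whose symbol is not
  one of 0, 2m-1, 3m-1 is generic: K = (I + J) mod 3 and k = (a + b) mod m.
  Since T meets every row, column and symbol exactly once, the sums over T of the weights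
  a + b - k, I + J - K and [I \<noteq> 1] - [J = 1] - [K = 2 \<and> k \<noteq> m - 1] are 3 m(m-1)/2 (a multiple
  of m because m is odd), 3m and 1. A generic entry contributes a multiple of m to the first,
  a multiple of 3 to the second and, outside A22, a nonnegative amount to the third. So the
  three entries carrying 0, 2m-1 and 3m-1 satisfy these constraints by themselves, and
  running through their few admissible positions shows that they cannot.
*)
theory Submission
  imports Defs
begin

lemma sum_lessThan_mult_div_mod:
  fixes g :: "nat \<Rightarrow> nat \<Rightarrow> 'a::comm_monoid_add"
  shows "(\<Sum>r<k * m. g (r div m) (r mod m)) = (\<Sum>q<k. \<Sum>a<m. g q a)"
proof -
  have block: "(\<Sum>r\<in>{q * m..<q * m + m}. g (r div m) (r mod m)) = (\<Sum>a<m. g q a)" for q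
  proof -
    have "(\<Sum>r\<in>{0 + q * m..<m + q * m}. g (r div m) (r mod m))
        = (\<Sum>a\<in>{0..<m}. g ((a + q * m) div m) ((a + q * m) mod m))"
      by (rule sum.shift_bounds_nat_ivl)
    also have "\<dots> = (\<Sum>a<m. g q a)"
      by (intro sum.cong) auto
    finally show ?thesis by (simp add: add.commute)
  qed
  show ?thesis
    by (simp only: sum.nat_group[of "\<lambda>r. g (r div m) (r mod m)" m k, symmetric] block)
qed

lemma dvd_sum_lessThan_if_odd:
  fixes m :: nat
  assumes "odd m"
  shows "m dvd (\<Sum>a<m. a)"
proof -
  obtain k where m: "m = 2 * k + 1" using assms oddE by blast
  have "(\<Sum>a<m. a) = m * (m - 1) div 2"
    using Sum_Ico_nat[of 0 m] by (simp add: atLeast0LessThan)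
  also have "\<dots> = m * k" by (simp add: m)
  finally show ?thesis by simp
qed

lemma bij_betw_lessThan_if_unique:
  assumes "finite T" "card T = n" "\<forall>k<n. \<exists>!e\<in>T. p e = k"
  shows "bij_betw p T {..<n}"
proof -
  let ?T' = "{e\<in>T. p e < n}"
  have inj: "inj_on p ?T'"
    using assms(3) by (intro inj_onI) (metis (mono_tags, lifting) mem_Collect_eq)
  have img: "p ` ?T' = {..<n}" using assms(3) by force
  have "card ?T' = n" using card_image[OF inj] img by simp
  then have "?T' = T" using assms(1,2) by (intro card_subset_eq) auto
  then show ?thesis using inj img by (simp add: bij_betw_def)
qed

lemma sum_transversal:
  assumes "transversal n L T"
  shows "(\<Sum>e\<in>T. f (fst e)) = (\<Sum>k<n. f k)"
    and "(\<Sum>e\<in>T. f (fst (snd e))) = (\<Sum>k<n. f k)"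
    and "(\<Sum>e\<in>T. f (snd (snd e))) = (\<Sum>k<n. f k)"
  using assms unfolding transversal_def
  by (auto intro!: sum.reindex_bij_betw bij_betw_lessThan_if_unique)

lemma transversal_symbol_unique:
  assumes "transversal n L T" "e \<in> T" "e' \<in> T"
    and "snd (snd e) = snd (snd e')" "snd (snd e') < n"
  shows "e = e'"
  using assms unfolding transversal_def by blast

definition count_weight :: "nat \<Rightarrow> entry \<Rightarrow> int" where
  "count_weight m e = of_bool (fst e div m \<noteq> 1) - of_bool (fst (snd e) div m = 1)
     - of_bool (snd (snd e) div m = 2 \<and> snd (snd e) mod m \<noteq> m - 1)"

definition residue_weight :: "nat \<Rightarrow> entry \<Rightarrow> int" where
  "residue_weight m e = int (fst e mod m) + int (fst (snd e) mod m) - int (snd (snd e) mod m)"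

definition block_weight :: "nat \<Rightarrow> entry \<Rightarrow> int" where
  "block_weight m e = int (fst e div m) + int (fst (snd e) div m) - int (snd (snd e) div m)"

lemma sum_count_weight:
  assumes "transversal (3 * m) L T" "0 < m"
  shows "(\<Sum>e\<in>T. count_weight m e) = 1"
proof -
  have rows: "(\<Sum>k<3 * m. of_bool (k div m \<noteq> 1)) = (\<Sum>q<3::nat. \<Sum>a<m. of_bool (q \<noteq> 1) :: int)"
    and cols: "(\<Sum>k<3 * m. of_bool (k div m = 1)) = (\<Sum>q<3::nat. \<Sum>a<m. of_bool (q = 1) :: int)"
    and symbols: "(\<Sum>k<3 * m. of_bool (k div m = 2 \<and> k mod m \<noteq> m - 1))
       = (\<Sum>q<3::nat. \<Sum>a<m. of_bool (q = 2 \<and> a \<noteq> m - 1) :: int)"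
    by (rule sum_lessThan_mult_div_mod)+
  have "{..<m} \<inter> {a. a \<noteq> m - 1} = {..<m - 1}"
    using assms(2) by auto
  with assms(2) show ?thesis
    unfolding count_weight_def sum_subtractf
      sum_transversal(1)[OF assms(1), of "\<lambda>r. of_bool (r div m \<noteq> 1)"]
      sum_transversal(2)[OF assms(1), of "\<lambda>c. of_bool (c div m = 1)"]
      sum_transversal(3)[OF assms(1), of "\<lambda>s. of_bool (s div m = 2 \<and> s mod m \<noteq> m - 1)"]
      rows cols symbols
    by (simp add: numeral_3_eq_3 lessThan_Suc)
qed

lemma dvd_sum_residue_weight:
  assumes "transversal (3 * m) L T" "odd m"
  shows "int m dvd (\<Sum>e\<in>T. residue_weight m e)"
proof -
  have "(\<Sum>e\<in>T. residue_weight m e) = (\<Sum>k<3 * m. int (k mod m))"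
    unfolding residue_weight_def sum_subtractf sum.distrib
      sum_transversal(1)[OF assms(1), of "\<lambda>r. int (r mod m)"]
      sum_transversal(2)[OF assms(1), of "\<lambda>c. int (c mod m)"]
      sum_transversal(3)[OF assms(1), of "\<lambda>s. int (s mod m)"]
    by simp
  also have "\<dots> = (\<Sum>q<3::nat. \<Sum>a<m. int a)"
    by (rule sum_lessThan_mult_div_mod)
  also have "\<dots> = 3 * (\<Sum>a<m. int a)"
    by (simp add: numeral_3_eq_3 lessThan_Suc)
  finally show ?thesis
    using dvd_sum_lessThan_if_odd[OF assms(2)] by (simp flip: of_nat_sum)
qed

lemma dvd_sum_block_weight:
  assumes "transversal (3 * m) L T"
  shows "3 dvd (\<Sum>e\<in>T. block_weight m e)"
proof -
  have "(\<Sum>e\<in>T. block_weight m e) = (\<Sum>k<3 * m. int (k div m))"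
    unfolding block_weight_def sum_subtractf sum.distrib
      sum_transversal(1)[OF assms(1), of "\<lambda>r. int (r div m)"]
      sum_transversal(2)[OF assms(1), of "\<lambda>c. int (c div m)"]
      sum_transversal(3)[OF assms(1), of "\<lambda>s. int (s div m)"]
    by simp
  also have "\<dots> = (\<Sum>q<3::nat. \<Sum>a<m. int q)"
    by (rule sum_lessThan_mult_div_mod)
  also have "\<dots> = 3 * int m"
    by (simp add: numeral_3_eq_3 lessThan_Suc)
  finally show ?thesis by simp
qed

lemma generic_entry_weights:
  assumes "0 < m" and s: "s = ((r div m + c div m) mod 3) * m + (r mod m + c mod m) mod m"
  shows "int m dvd residue_weight m (r, c, s)"
    and "3 dvd block_weight m (r, c, s)"
    and "r div m < 3 \<Longrightarrow> c div m < 3 \<Longrightarrow> \<not> (r div m = 1 \<and> c div m = 1) \<Longrightarrow>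
      0 \<le> count_weight m (r, c, s)"
proof -
  have s_div: "s div m = (r div m + c div m) mod 3" and s_mod: "s mod m = (r mod m + c mod m) mod m"
    using assms by simp_all
  show "int m dvd residue_weight m (r, c, s)"
    by (simp add: residue_weight_def s_mod zmod_int[of "r mod m + c mod m"])
  show "3 dvd block_weight m (r, c, s)"
    by (simp add: block_weight_def s_div zmod_int[of "r div m + c div m"])
  assume "r div m < 3" "c div m < 3" "\<not> (r div m = 1 \<and> c div m = 1)"
  then have "(r div m, c div m) \<in> {(0, 0), (0, 1), (0, 2), (1, 0), (1, 2), (2, 0), (2, 1), (2, 2)}"
    by auto
  then show "0 \<le> count_weight m (r, c, s)"
    unfolding count_weight_def s_div s_mod snd_conv fst_conv by auto
qed

lemma Ablock_values:
  fixes m i j a b :: nat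
  assumes "3 \<le> m" "i \<in> {1, 2, 3}" "j \<in> {1, 2, 3}"
  defines "t \<equiv> (a + b) mod m"
  shows "Ablock m i j a b \<notin> {0, 2 * m - 1, 3 * m - 1} \<Longrightarrow>
      Ablock m i j a b = ((i + j + 1) mod 3) * m + t"
    and "Ablock m i j a b = 0 \<Longrightarrow> (i, j) \<noteq> (2, 2) \<Longrightarrow> (i, j, t) \<in> {(1, 1, 0), (3, 3, m - 1)}"
    and "Ablock m i j a b = 2 * m - 1 \<Longrightarrow> (i, j, t) \<in> {(1, 2, m - 1), (2, 3, 0), (3, 1, m - 1)}"
    and "Ablock m i j a b = 3 * m - 1 \<Longrightarrow> (i, j, t) \<in> {(1, 3, m - 1), (3, 2, 0), (2, 1, m - 1)}"
proof -
  have "t < m" using assms(1) by (simp add: t_def)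
  with assms(1) have "\<forall>i\<in>{1, 2, 3}. \<forall>j\<in>{1, 2, 3}.
      (Ablock m i j a b \<notin> {0, 2 * m - 1, 3 * m - 1} \<longrightarrow>
        Ablock m i j a b = ((i + j + 1) mod 3) * m + t) \<and>
      (Ablock m i j a b = 0 \<longrightarrow> (i, j) \<noteq> (2, 2) \<longrightarrow> (i, j, t) \<in> {(1, 1, 0), (3, 3, m - 1)}) \<and>
      (Ablock m i j a b = 2 * m - 1 \<longrightarrow> (i, j, t) \<in> {(1, 2, m - 1), (2, 3, 0), (3, 1, m - 1)}) \<and>
      (Ablock m i j a b = 3 * m - 1 \<longrightarrow> (i, j, t) \<in> {(1, 3, m - 1), (3, 2, 0), (2, 1, m - 1)})"
    by (simp add: Ablock_def Let_def flip: t_def; arith)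
  with assms(2,3) show
    "Ablock m i j a b \<notin> {0, 2 * m - 1, 3 * m - 1} \<Longrightarrow>
      Ablock m i j a b = ((i + j + 1) mod 3) * m + t"
    and "Ablock m i j a b = 0 \<Longrightarrow> (i, j) \<noteq> (2, 2) \<Longrightarrow> (i, j, t) \<in> {(1, 1, 0), (3, 3, m - 1)}"
    and "Ablock m i j a b = 2 * m - 1 \<Longrightarrow> (i, j, t) \<in> {(1, 2, m - 1), (2, 3, 0), (3, 1, m - 1)}"
    and "Ablock m i j a b = 3 * m - 1 \<Longrightarrow> (i, j, t) \<in> {(1, 3, m - 1), (3, 2, 0), (2, 1, m - 1)}"
    by meson+
qed

lemma Lsq_memE:
  assumes "e \<in> Lsq m"
  obtains r c where "e = (r, c, Ablock m (r div m + 1) (c div m + 1) (r mod m) (c mod m))"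
    and "r div m + 1 \<in> {1, 2, 3}" "c div m + 1 \<in> {1, 2, 3}"
proof -
  obtain r c where "e = (r, c, Ablock m (r div m + 1) (c div m + 1) (r mod m) (c mod m))"
    and "r < 3 * m" "c < 3 * m"
    using assms unfolding Lsq_def by auto
  moreover from this have "r div m + 1 \<in> {1, 2, 3}" "c div m + 1 \<in> {1, 2, 3}"
    using less_mult_imp_div_less[of r 3 m] less_mult_imp_div_less[of c 3 m] by (auto simp: mult.commute)
  ultimately show ?thesis using that by blast
qed

lemma Lsq_generic_entry:
  assumes "3 \<le> m" "(r, c, s) \<in> Lsq m" "s \<notin> {0, 2 * m - 1, 3 * m - 1}"
  shows "s = ((r div m + c div m) mod 3) * m + (r mod m + c mod m) mod m"
proof -
  have s: "s = Ablock m (r div m + 1) (c div m + 1) (r mod m) (c mod m)"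
    and i: "r div m + 1 \<in> {1, 2, 3}" and j: "c div m + 1 \<in> {1, 2, 3}"
    using Lsq_memE[OF assms(2)] by fastforce+
  then show ?thesis
    using Ablock_values(1)[OF assms(1) i j] assms(3) by simp
qed

lemma in_block_2_2_iff:
  assumes "0 < m"
  shows "in_block m 2 2 e \<longleftrightarrow> fst e div m = 1 \<and> fst (snd e) div m = 1"
proof -
  have "r div m = 1 \<longleftrightarrow> m \<le> r \<and> r < 2 * m" for r
    using less_eq_div_iff_mult_less_eq[OF assms, of 1 r] div_less_iff_less_mult[OF assms, of r 2] by auto
  then show ?thesis unfolding in_block_def by simp
qed

lemma Lsq_generic_entry_weights:
  assumes "3 \<le> m" "e \<in> Lsq m" "\<not> in_block m 2 2 e"
    and "snd (snd e) \<notin> {0, 2 * m - 1, 3 * m - 1}"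
  shows "0 \<le> count_weight m e \<and> int m dvd residue_weight m e \<and> 3 dvd block_weight m e"
proof -
  obtain r c s where e: "e = (r, c, s)" by (cases e)
  have m: "0 < m" using assms(1) by simp
  have s: "s = ((r div m + c div m) mod 3) * m + (r mod m + c mod m) mod m"
    using Lsq_generic_entry[OF assms(1)] assms(2,4) e by simp
  have "r div m < 3" "c div m < 3"
    using assms(2) e less_mult_imp_div_less[of r 3 m] less_mult_imp_div_less[of c 3 m]
    by (auto simp: Lsq_def mult.commute)
  moreover have "\<not> (r div m = 1 \<and> c div m = 1)"
    using assms(3) in_block_2_2_iff[OF m] e by simp
  ultimately show ?thesis
    using generic_entry_weights[OF m s] unfolding e by simp
qed

lemma residue_weight_mod:
  "residue_weight m (r, c, s) mod int m = (int ((r mod m + c mod m) mod m) - int (s mod m)) mod int m"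
  unfolding residue_weight_def by (simp add: mod_diff_left_eq zmod_int[of "r mod m + c mod m"])

lemma special_symbol_div_mod:
  fixes m :: nat
  assumes "0 < m"
  shows "(2 * m - 1) div m = 1" "(2 * m - 1) mod m = m - 1"
    and "(3 * m - 1) div m = 2" "(3 * m - 1) mod m = m - 1"
proof -
  show "(2 * m - 1) div m = 1" "(3 * m - 1) div m = 2"
    using assms by (auto intro: div_nat_eqI)
  have "2 * m - 1 - (m - 1) = m" "3 * m - 1 - (m - 1) = 2 * m"
    using assms by simp_all
  then show "(2 * m - 1) mod m = m - 1" "(3 * m - 1) mod m = m - 1"
    using assms by (auto intro: mod_nat_eqI)
qed

lemma Lsq_special_entry_weights:
  assumes "3 \<le> m" "e \<in> Lsq m" "\<not> in_block m 2 2 e"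
  defines "profile \<equiv> (count_weight m e, block_weight m e, residue_weight m e mod int m)"
  shows "snd (snd e) = 0 \<Longrightarrow> profile \<in> {(1, 0, 0), (1, 4, int m - 1)}"
    and "snd (snd e) = 2 * m - 1 \<Longrightarrow> profile \<in> {(0, 0, 0), (0, 2, 1), (1, 1, 0)}"
    and "snd (snd e) = 3 * m - 1 \<Longrightarrow> profile \<in> {(1, 0, 0), (0, 1, 1), (0, -1, 0)}"
proof -
  obtain r c s where e: "e = (r, c, s)" and s: "s = Ablock m (r div m + 1) (c div m + 1) (r mod m) (c mod m)"
    and i: "r div m + 1 \<in> {1, 2, 3}" and j: "c div m + 1 \<in> {1, 2, 3}"
    using Lsq_memE[OF assms(2)] by blast
  define t where "t = (r mod m + c mod m) mod m"
  have m: "0 < m" "1 < m" using assms(1) by simp_all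
  have not_A22: "(r div m + 1, c div m + 1) \<noteq> (2, 2)"
    using assms(3) in_block_2_2_iff[OF m(1)] e by simp
  have profile: "profile = (of_bool (r div m \<noteq> 1) - of_bool (c div m = 1)
      - of_bool (s div m = 2 \<and> s mod m \<noteq> m - 1),
      int (r div m) + int (c div m) - int (s div m), (int t - int (s mod m)) mod int m)"
    unfolding profile_def count_weight_def block_weight_def e t_def residue_weight_mod by simp
  have [simp]: "(1 - int m) mod int m = 1" "- 1 mod int m = int m - 1"
    using m by (simp_all add: mod_pos_pos_trivial zmod_minus1)
  show "profile \<in> {(1, 0, 0), (1, 4, int m - 1)}" if "snd (snd e) = 0"
  proof -
    have "(r div m + 1, c div m + 1, t) \<in> {(1, 1, 0), (3, 3, m - 1)}"
      using Ablock_values(2)[OF assms(1) i j _ not_A22] that by (simp add: e s t_def)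
    then show ?thesis using that m unfolding profile by (auto simp: e)
  qed
  show "profile \<in> {(0, 0, 0), (0, 2, 1), (1, 1, 0)}" if "snd (snd e) = 2 * m - 1"
  proof -
    have "(r div m + 1, c div m + 1, t) \<in> {(1, 2, m - 1), (2, 3, 0), (3, 1, m - 1)}"
      using Ablock_values(3)[OF assms(1) i j] that by (simp add: e s t_def)
    then show ?thesis using that m special_symbol_div_mod[OF m(1)] unfolding profile by (auto simp: e)
  qed
  show "profile \<in> {(1, 0, 0), (0, 1, 1), (0, -1, 0)}" if "snd (snd e) = 3 * m - 1"
  proof -
    have "(r div m + 1, c div m + 1, t) \<in> {(1, 3, m - 1), (3, 2, 0), (2, 1, m - 1)}"
      using Ablock_values(4)[OF assms(1) i j] that by (simp add: e s t_def)
    then show ?thesis using that m special_symbol_div_mod[OF m(1)] unfolding profile by (auto simp: e)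
  qed
qed

lemma special_weights_inconsistent:
  fixes m c0 c1 c2 b0 b1 b2 r0 r1 r2 :: int
  assumes "3 \<le> m"
    and "(c0, b0, r0) \<in> {(1, 0, 0), (1, 4, m - 1)}"
    and "(c1, b1, r1) \<in> {(0, 0, 0), (0, 2, 1), (1, 1, 0)}"
    and "(c2, b2, r2) \<in> {(1, 0, 0), (0, 1, 1), (0, -1, 0)}"
    and "c0 + c1 + c2 \<le> 1" "3 dvd b0 + b1 + b2" "m dvd r0 + r1 + r2"
  shows False
proof -
  have "r0 + r1 + r2 \<in> {2, m - 1}"
    using assms(2-6) by auto
  moreover have "0 < r0 + r1 + r2 \<and> r0 + r1 + r2 < m"
    if "r0 + r1 + r2 \<in> {2, m - 1}" using that assms(1) by auto
  ultimately show False
    using assms(7) zdvd_not_zless by blast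
qed

lemma special_entries_weight_bounds:
  assumes "odd m" "3 \<le> m" and T: "transversal (3 * m) (Lsq m) T"
    and avoids_A22: "\<forall>e\<in>T. \<not> in_block m 2 2 e"
    and e0: "e0 \<in> T" "snd (snd e0) = 0"
    and e1: "e1 \<in> T" "snd (snd e1) = 2 * m - 1"
    and e2: "e2 \<in> T" "snd (snd e2) = 3 * m - 1"
  shows "count_weight m e0 + count_weight m e1 + count_weight m e2 \<le> 1"
    and "int m dvd residue_weight m e0 + residue_weight m e1 + residue_weight m e2"
    and "3 dvd block_weight m e0 + block_weight m e1 + block_weight m e2"
proof -
  let ?E = "{e0, e1, e2}"
  have m: "0 < m" using assms(2) by simp
  have "finite T" and T_Lsq: "T \<subseteq> Lsq m"
    using T by (simp_all add: transversal_def)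
  have special_symbols: "0 < 3 * m" "2 * m - 1 < 3 * m" "3 * m - 1 < 3 * m"
    using assms(2) by simp_all
  have "e0 \<noteq> e1" "e0 \<noteq> e2" "e1 \<noteq> e2"
    using e0 e1 e2 assms(2) by auto
  then have split: "(\<Sum>e\<in>T. w e) = w e0 + w e1 + w e2 + (\<Sum>e\<in>T - ?E. w e)" for w :: "entry \<Rightarrow> int"
    using sum.subset_diff[of ?E T w] \<open>finite T\<close> e0 e1 e2 by (simp add: add.commute add.left_commute)
  have generic: "0 \<le> count_weight m e \<and> int m dvd residue_weight m e \<and> 3 dvd block_weight m e"
    if "e \<in> T - ?E" for e
  proof (rule Lsq_generic_entry_weights[OF assms(2)])
    show "e \<in> Lsq m" "\<not> in_block m 2 2 e"
      using that T_Lsq avoids_A22 by auto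
    have e: "e \<in> T" and "e \<noteq> e0" "e \<noteq> e1" "e \<noteq> e2"
      using that by auto
    then show "snd (snd e) \<notin> {0, 2 * m - 1, 3 * m - 1}"
      using transversal_symbol_unique[OF T e e0(1)] transversal_symbol_unique[OF T e e1(1)]
        transversal_symbol_unique[OF T e e2(1)] e0(2) e1(2) e2(2) special_symbols
      by auto
  qed
  have "count_weight m e0 + count_weight m e1 + count_weight m e2 + (\<Sum>e\<in>T - ?E. count_weight m e) = 1"
    using sum_count_weight[OF T m] split by simp
  moreover have "0 \<le> (\<Sum>e\<in>T - ?E. count_weight m e)"
    using generic by (intro sum_nonneg) blast
  ultimately show "count_weight m e0 + count_weight m e1 + count_weight m e2 \<le> 1"
    by linarith
  have "int m dvd (\<Sum>e\<in>T - ?E. residue_weight m e)"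
    using generic by (intro dvd_sum) blast
  then show "int m dvd residue_weight m e0 + residue_weight m e1 + residue_weight m e2"
    using dvd_sum_residue_weight[OF T assms(1)] split by (simp add: dvd_add_left_iff)
  have "3 dvd (\<Sum>e\<in>T - ?E. block_weight m e)"
    using generic by (intro dvd_sum) blast
  then show "3 dvd block_weight m e0 + block_weight m e1 + block_weight m e2"
    using dvd_sum_block_weight[OF T] split by (simp add: dvd_add_left_iff)
qed

theorem lemma13:
  fixes m :: nat and T :: "entry set"
  assumes "odd m" and "m \<ge> 3"
    and "transversal (3 * m) (Lsq m) T"
  shows "\<exists>e\<in>T. in_block m 2 2 e"
proof (rule ccontr)
  assume "\<not> ?thesis"
  then have avoids_A22: "\<forall>e\<in>T. \<not> in_block m 2 2 e" by blast
  have symbol_occurs: "\<exists>e\<in>T. snd (snd e) = s" if "s < 3 * m" for s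
    using assms(3) that unfolding transversal_def by blast
  have "0 < 3 * m" "2 * m - 1 < 3 * m" "3 * m - 1 < 3 * m"
    using assms(2) by simp_all
  then obtain e0 e1 e2 where e0: "e0 \<in> T" "snd (snd e0) = 0"
    and e1: "e1 \<in> T" "snd (snd e1) = 2 * m - 1" and e2: "e2 \<in> T" "snd (snd e2) = 3 * m - 1"
    using symbol_occurs by meson
  note bounds = special_entries_weight_bounds[OF assms avoids_A22 e0 e1 e2]
  have "e0 \<in> Lsq m" "e1 \<in> Lsq m" "e2 \<in> Lsq m"
    using assms(3) e0 e1 e2 by (auto simp: transversal_def)
  note profiles = Lsq_special_entry_weights(1)[OF assms(2) this(1) _ e0(2)]
    Lsq_special_entry_weights(2)[OF assms(2) this(2) _ e1(2)]
    Lsq_special_entry_weights(3)[OF assms(2) this(3) _ e2(2)]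
  have "int m dvd
      residue_weight m e0 mod int m + residue_weight m e1 mod int m + residue_weight m e2 mod int m"
    using bounds(2) by (metis dvd_eq_mod_eq_0 mod_add_eq mod_add_left_eq)
  then show False
    using special_weights_inconsistent[OF _ profiles bounds(1) bounds(3)] avoids_A22 e0 e1 e2 assms(2)
    by simp
qed

end
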